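(* Let $(\hat\sigma(n))_{n\ge0}$ be defined by $\hat\sigma(0)=1$, $\hat\sigma(1)=-\tfrac13$, and for $n\ge1$: $\hat\sigma(2n)=\hat\sigma(n)$, $\hat\sigma(2n+1)=-\tfrac12(\hat\sigma(n)+\hat\sigma(n+1))$. Let $K,L\ge9$ be odd natural numbers. If $K$ and $L$ are TM-equivalent, then $l(K)=l(L)$.
   Context: Two numbers $K,L\ge0$ are TM-equivalent if $\hat\sigma(2K+1)=\hat\sigma(2L+1)$. For odd $K$, $l(K)=a_1+\dots+a_r$ where $K_0=K$, $K_{i-1}=2^{a_i}K_i+1$ with $K_i$ odd, $a_i\ge1$, and $K_r=1$; equivalently $l(K)=\lfloor\log_2K\rfloor$. *)

theory Defs
  imports Complex_Main
begin

function sigma_hat :: "nat \<Rightarrow> real" where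
  "sigma_hat 0 = 1"
| "sigma_hat (Suc 0) = -1/3"
| "sigma_hat (Suc (Suc n)) =
     (if even n then sigma_hat (Suc (n div 2))
      else - (sigma_hat (Suc (n div 2)) + sigma_hat (Suc (Suc (n div 2)))) / 2)"
  by pat_completeness auto
termination
  by (relation "measure id") (auto elim!: oddE)

definition TM_equiv :: "nat \<Rightarrow> nat \<Rightarrow> bool" where
  "TM_equiv K L \<longleftrightarrow> sigma_hat (2*K+1) = sigma_hat (2*L+1)"

definition ell :: "nat \<Rightarrow> nat" where
  "ell K = nat \<lfloor>log 2 (real K)\<rfloor>"


end

theory Submission
  imports Defs
begin

text \<open>For \<open>2^(k+2) \<le> n < 2^(k+3)\<close> both \<open>3(\<sigma>(n) + \<sigma>(n+1))\<close> and \<open>3(\<sigma>(n) - \<sigma>(n+1))\<close>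
  are odd integers divided by \<open>2^k\<close>. Going from \<open>m = n div 2\<close> to \<open>n\<close>, the new sum is
  \<open>\<plusminus>\<close> half the old difference and the new difference is half the old difference plus
  \<open>\<plusminus>\<close> the old sum, so the odd numerators persist while the exponent grows by one.
  As \<open>\<sigma>(2K+1) = -(\<sigma>(K) + \<sigma>(K+1))/2\<close>, the exact power of 2 in the denominator of
  \<open>\<sigma>(2K+1)\<close> is \<open>2^(l(K)-1)\<close>, so \<open>\<sigma>(2K+1)\<close> determines \<open>l(K)\<close>. This needs only
  \<open>K, L \<ge> 4\<close>.\<close>

definition odd_over_pow2 :: "real \<Rightarrow> nat \<Rightarrow> bool" where
  "odd_over_pow2 x k \<longleftrightarrow> (\<exists>a::int. odd a \<and> x = of_int a / 2^k)"

lemma odd_over_pow2_uminus: "odd_over_pow2 x k \<Longrightarrow> odd_over_pow2 (- x) k"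
  unfolding odd_over_pow2_def by (metis even_minus minus_divide_left of_int_minus)

lemma odd_over_pow2_half: "odd_over_pow2 x k \<Longrightarrow> odd_over_pow2 (x / 2) (Suc k)"
  unfolding odd_over_pow2_def by auto

lemma odd_over_pow2_add:
  assumes "odd_over_pow2 x (Suc k)"
  shows "odd_over_pow2 (x + of_int b / 2^k) (Suc k)"
proof -
  obtain a where "odd a" and x: "x = of_int a / 2^Suc k"
    using assms unfolding odd_over_pow2_def by blast
  then have "x + of_int b / 2^k = of_int (a + 2 * b) / 2^Suc k"
    by (simp add: field_simps)
  moreover have "odd (a + 2 * b)"
    using \<open>odd a\<close> by simp
  ultimately show ?thesis
    unfolding odd_over_pow2_def by blast
qed

lemma odd_over_pow2_not_dyadic_below:
  assumes "odd_over_pow2 x j" and "i < j"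
  shows "x \<noteq> of_int a / 2^i"
proof
  assume a: "x = of_int a / 2^i"
  obtain b :: int where "odd b" and b: "x = of_int b / 2^j"
    using assms(1) unfolding odd_over_pow2_def by blast
  have "real_of_int b = x * 2^j"
    using b by simp
  also have "\<dots> = of_int a * 2^(j - i)"
    using \<open>i < j\<close> by (simp add: a power_diff)
  finally have "b = a * 2^(j - i)"
    by (metis of_int_eq_iff of_int_mult of_int_numeral of_int_power)
  with \<open>odd b\<close> \<open>i < j\<close> show False by simp
qed

lemma odd_over_pow2_unique:
  assumes "odd_over_pow2 x i" and "odd_over_pow2 x j"
  shows "i = j"
  using odd_over_pow2_not_dyadic_below assms unfolding odd_over_pow2_def
  by (metis linorder_neqE_nat)

lemma sigma_hat_double: "m \<ge> 1 \<Longrightarrow> sigma_hat (2 * m) = sigma_hat m"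
  by (cases m) (simp_all add: mult_2)

lemma sigma_hat_double_Suc:
  "m \<ge> 1 \<Longrightarrow> sigma_hat (2 * m + 1) = - (sigma_hat m + sigma_hat (m + 1)) / 2"
  by (cases m) (simp_all add: mult_2)

lemma odd_over_pow2_sigma_hat_step:
  assumes "m \<ge> 1" and "n div 2 = m"
    and sum: "odd_over_pow2 (3 * (sigma_hat m + sigma_hat (m + 1))) k"
    and diff: "odd_over_pow2 (3 * (sigma_hat m - sigma_hat (m + 1))) k"
  shows "odd_over_pow2 (3 * (sigma_hat n + sigma_hat (n + 1))) (Suc k)
    \<and> odd_over_pow2 (3 * (sigma_hat n - sigma_hat (n + 1))) (Suc k)"
proof -
  obtain a :: int where a: "3 * (sigma_hat m + sigma_hat (m + 1)) = of_int a / 2^k"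
    using sum unfolding odd_over_pow2_def by blast
  have half_diff: "odd_over_pow2 (3 * (sigma_hat m - sigma_hat (m + 1)) / 2) (Suc k)"
    using diff by (rule odd_over_pow2_half)
  have at_2m: "sigma_hat (2 * m) = sigma_hat m"
    and at_2m_2: "sigma_hat (2 * m + 2) = sigma_hat (m + 1)"
    and at_2m_1: "sigma_hat (2 * m + 1) = - (sigma_hat m + sigma_hat (m + 1)) / 2"
    using sigma_hat_double[of m] sigma_hat_double[of "m + 1"] sigma_hat_double_Suc[of m]
      \<open>m \<ge> 1\<close>
    by simp_all
  consider "n = 2 * m" | "n = 2 * m + 1"
    using \<open>n div 2 = m\<close> by linarith
  then show ?thesis
  proof cases
    case 1
    have "sigma_hat n = sigma_hat m"
      and "sigma_hat (n + 1) = - (sigma_hat m + sigma_hat (m + 1)) / 2"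
      using 1 at_2m at_2m_1 by simp_all
    then have sum_n:
        "3 * (sigma_hat n + sigma_hat (n + 1)) = 3 * (sigma_hat m - sigma_hat (m + 1)) / 2"
      and diff_n: "3 * (sigma_hat n - sigma_hat (n + 1))
        = 3 * (sigma_hat m - sigma_hat (m + 1)) / 2 + of_int a / 2^k"
      unfolding a[symmetric] by (simp_all only:) (simp_all add: field_simps)
    show ?thesis
      unfolding sum_n diff_n using half_diff odd_over_pow2_add by blast
  next
    case 2
    have minus_a: "of_int (- a) / 2^k = - 3 * (sigma_hat m + sigma_hat (m + 1))"
      using a by simp
    have "sigma_hat n = - (sigma_hat m + sigma_hat (m + 1)) / 2"
      and "sigma_hat (n + 1) = sigma_hat (m + 1)"
      using 2 at_2m_2 at_2m_1 by simp_all
    then have sum_n: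
        "3 * (sigma_hat n + sigma_hat (n + 1)) = - (3 * (sigma_hat m - sigma_hat (m + 1)) / 2)"
      and diff_n: "3 * (sigma_hat n - sigma_hat (n + 1))
        = 3 * (sigma_hat m - sigma_hat (m + 1)) / 2 + of_int (- a) / 2^k"
      unfolding minus_a by (simp_all only:) (simp_all add: field_simps)
    show ?thesis
      unfolding sum_n diff_n using half_diff odd_over_pow2_add odd_over_pow2_uminus by blast
  qed
qed

lemma odd_over_pow2_sigma_hat:
  assumes "2^(k + 2) \<le> n" and "n < 2^(k + 3)"
  shows "odd_over_pow2 (3 * (sigma_hat n + sigma_hat (n + 1))) k
    \<and> odd_over_pow2 (3 * (sigma_hat n - sigma_hat (n + 1))) k"
  using assms
proof (induction k arbitrary: n)
  case 0
  have "sigma_hat 2 = -1/3" "sigma_hat 3 = 1/3"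
    using sigma_hat_double[of 1] sigma_hat_double_Suc[of 1] by simp_all
  then have "sigma_hat 4 = -1/3" "sigma_hat 5 = 0" "sigma_hat 6 = 1/3" "sigma_hat 7 = 0"
    using sigma_hat_double[of 2] sigma_hat_double_Suc[of 2]
      sigma_hat_double[of 3] sigma_hat_double_Suc[of 3] by simp_all
  moreover have "sigma_hat 8 = -1/3"
    using sigma_hat_double[of 4] \<open>sigma_hat 4 = -1/3\<close> by simp
  moreover have "n \<in> {4, 5, 6, 7}"
    using "0.prems" by auto
  ultimately have "\<bar>3 * (sigma_hat n + sigma_hat (n + 1))\<bar> = 1"
    and "\<bar>3 * (sigma_hat n - sigma_hat (n + 1))\<bar> = 1"
    by auto
  moreover have "odd_over_pow2 x 0" if "\<bar>x\<bar> = 1" for x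
  proof -
    have "x = of_int 1 \<or> x = of_int (- 1)"
      using that by linarith
    then show ?thesis
      unfolding odd_over_pow2_def by (metis div_by_1 odd_one even_minus power_0)
  qed
  ultimately show ?case
    by blast
next
  case (Suc k)
  have "2^(k + 2) \<le> n div 2" and "n div 2 < 2^(k + 3)"
    using Suc.prems div_less_iff_less_mult[of 2 n "2^(k + 2)"]
      div_less_iff_less_mult[of 2 n "2^(k + 3)"]
    by (simp_all add: power_add mult.commute flip: not_less)
  moreover have "n div 2 \<ge> 1"
    using \<open>2^(k + 2) \<le> n div 2\<close> by (metis le_trans one_le_numeral one_le_power)
  ultimately show ?case
    using Suc.IH odd_over_pow2_sigma_hat_step by blast
qed

lemma odd_over_pow2_sigma_hat_odd_index:
  assumes "2^(k + 2) \<le> K" and "K < 2^(k + 3)"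
  shows "odd_over_pow2 (3 * sigma_hat (2 * K + 1)) (Suc k)"
proof -
  have "K \<ge> 1"
    using assms(1) by (metis le_trans one_le_numeral one_le_power)
  then have "3 * sigma_hat (2 * K + 1) = - (3 * (sigma_hat K + sigma_hat (K + 1)) / 2)"
    using sigma_hat_double_Suc[OF \<open>K \<ge> 1\<close>] by linarith
  moreover have "odd_over_pow2 (3 * (sigma_hat K + sigma_hat (K + 1))) k"
    using odd_over_pow2_sigma_hat[OF assms] by blast
  ultimately show ?thesis
    using odd_over_pow2_half odd_over_pow2_uminus by simp
qed

lemma ell_eq_of_bounds:
  assumes "2^(k + 2) \<le> K" and "K < 2^(k + 3)"
  shows "ell K = k + 2"
proof -
  have "K < 2^(k + 2 + 1)"
    using assms(2) by (simp add: power_add)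
  then have "\<lfloor>log 2 (real K)\<rfloor> = int (k + 2)"
    using floor_log_nat_eq_if[OF assms(1) _ order.refl] by simp
  then show ?thesis
    unfolding ell_def by simp
qed

lemma ex_power_ivl_ge_4:
  fixes K :: nat
  assumes "4 \<le> K"
  obtains k where "2^(k + 2) \<le> K" and "K < 2^(k + 3)"
proof -
  obtain e where e: "2^e \<le> K" "K < 2^(e + 1)"
    using ex_power_ivl1[of 2 K] assms by auto
  have "e \<ge> 2"
  proof (rule ccontr)
    assume "\<not> e \<ge> 2"
    then have "(2::nat)^(e + 1) \<le> 2^2"
      by (intro power_increasing) simp_all
    with assms e(2) show False
      by simp
  qed
  then have "e = (e - 2) + 2" and "e + 1 = (e - 2) + 3"
    by simp_all
  then show ?thesis
    using that[of "e - 2"] e by metis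
qed

theorem lemma4p5:
  fixes K L :: nat
  assumes "odd K" and "odd L" and "K \<ge> 9" and "L \<ge> 9"
    and "TM_equiv K L"
  shows "ell K = ell L"
proof -
  have "4 \<le> K" and "4 \<le> L"
    using \<open>K \<ge> 9\<close> \<open>L \<ge> 9\<close> by simp_all
  obtain k where K: "2^(k + 2) \<le> K" "K < 2^(k + 3)"
    using ex_power_ivl_ge_4[OF \<open>4 \<le> K\<close>] by blast
  obtain l where L: "2^(l + 2) \<le> L" "L < 2^(l + 3)"
    using ex_power_ivl_ge_4[OF \<open>4 \<le> L\<close>] by blast
  have "sigma_hat (2 * K + 1) = sigma_hat (2 * L + 1)"
    using \<open>TM_equiv K L\<close> unfolding TM_equiv_def .
  then have "Suc k = Suc l"
    using odd_over_pow2_sigma_hat_odd_index[OF K] odd_over_pow2_sigma_hat_odd_index[OF L]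
    by (metis odd_over_pow2_unique)
  then show ?thesis
    using ell_eq_of_bounds K L by simp
qed
end
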